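(* Let $\underline{R}$, $\underline{T}$ be $n$-tuples of bounded operators on Hilbert spaces $\mathcal{L}$, $\mathcal{M}$ respectively. Then the maximal commuting piece of $(R_1\oplus T_1,\ldots,R_n\oplus T_n)$ on $\mathcal{L}\oplus\mathcal{M}$ is $(R_1^c\oplus T_1^c,\ldots,R_n^c\oplus T_n^c)$ acting on $\mathcal{L}^c\oplus\mathcal{M}^c$, where $\mathcal{L}^c=\mathcal{L}^c(\underline{R})$, $\mathcal{M}^c=\mathcal{M}^c(\underline{T})$. The maximal commuting piece of $(R_1\otimes I,\ldots,R_n\otimes I)$ on $\mathcal{L}\otimes\mathcal{M}$ is $(R_1^c\otimes I,\ldots,R_n^c\otimes I)$ acting on $\mathcal{L}^c\otimes\mathcal{M}$.
   Context: For a tuple $\underline{R}$ on $\mathcal{L}$, $\mathcal{L}^c(\underline{R})$ is the largest closed subspace of $\mathcal{L}$ invariant under every $R_i^*$ such that $R_i^*R_j^*h=R_j^*R_i^*h$ for all $h$ in it and all $i,j$; the maximal commuting piece of $\underline{R}$ is $\underline{R}^c=(R^c_1,\ldots,R^c_n)$ with $R^c_i=P_{\mathcal{L}^c(\underline{R})}R_i|_{\mathcal{L}^c(\underline{R})}$, acting on $\mathcal{L}^c(\underline{R})$. *)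

theory Defs
  imports "HOL-Analysis.Analysis"
begin

text \<open>The distribution has no complex Hilbert spaces, so we introduce them.
  The inner product is conjugate-linear in the first and linear in the second argument.\<close>

class complex_inner = real_normed_vector +
  fixes scaleC :: "complex \<Rightarrow> 'a \<Rightarrow> 'a" (infixr \<open>*\<^sub>C\<close> 75)
    and cinner :: "'a \<Rightarrow> 'a \<Rightarrow> complex"
  assumes scaleC_add_right: "a *\<^sub>C (x + y) = a *\<^sub>C x + a *\<^sub>C y"
    and scaleC_add_left: "(a + b) *\<^sub>C x = a *\<^sub>C x + b *\<^sub>C x"
    and scaleC_scaleC: "a *\<^sub>C (b *\<^sub>C x) = (a * b) *\<^sub>C x"
    and scaleC_one: "1 *\<^sub>C x = x"
    and scaleR_scaleC: "scaleR r x = of_real r *\<^sub>C x"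
    and cinner_cnj: "cinner x y = cnj (cinner y x)"
    and cinner_add_right: "cinner x (y + z) = cinner x y + cinner x z"
    and cinner_scaleC_right: "cinner x (a *\<^sub>C y) = a * cinner x y"
    and cinner_ge_zero: "0 \<le> Re (cinner x x)"
    and cinner_eq_zero_iff: "cinner x x = 0 \<longleftrightarrow> x = 0"
    and norm_eq_sqrt_cinner: "norm x = sqrt (Re (cinner x x))"

class chilbert_space = complex_inner + complete_space

text \<open>External orthogonal direct sum: the product type.\<close>

instantiation prod :: (complex_inner, complex_inner) complex_inner
begin

definition scaleC_prod_def: "a *\<^sub>C x = (a *\<^sub>C fst x, a *\<^sub>C snd x)"
definition cinner_prod_def: "cinner x y = cinner (fst x) (fst y) + cinner (snd x) (snd y)"

instance
proof
  fix a b :: complex and x y z :: "'a \<times> 'b" and r :: real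
  show "a *\<^sub>C (x + y) = a *\<^sub>C x + a *\<^sub>C y"
    by (simp add: scaleC_prod_def scaleC_add_right)
  show "(a + b) *\<^sub>C x = a *\<^sub>C x + b *\<^sub>C x"
    by (simp add: scaleC_prod_def scaleC_add_left)
  show "a *\<^sub>C (b *\<^sub>C x) = (a * b) *\<^sub>C x"
    by (simp add: scaleC_prod_def scaleC_scaleC)
  show "1 *\<^sub>C x = x"
    by (simp add: scaleC_prod_def scaleC_one)
  show "scaleR r x = of_real r *\<^sub>C x"
    by (simp add: scaleC_prod_def scaleR_scaleC scaleR_prod_def)
  show "cinner x y = cnj (cinner y x)"
    by (simp add: cinner_prod_def cinner_cnj[of "fst x"] cinner_cnj[of "snd x"])
  show "cinner x (y + z) = cinner x y + cinner x z"
    by (simp add: cinner_prod_def cinner_add_right)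
  show "cinner x (a *\<^sub>C y) = a * cinner x y"
    by (simp add: cinner_prod_def scaleC_prod_def cinner_scaleC_right algebra_simps)
  show "0 \<le> Re (cinner x x)"
    using cinner_ge_zero[of "fst x"] cinner_ge_zero[of "snd x"]
    by (simp add: cinner_prod_def)
  have n1: "Re (cinner (fst x) (fst x)) = (norm (fst x))\<^sup>2"
    using cinner_ge_zero[of "fst x"] by (simp add: norm_eq_sqrt_cinner)
  have n2: "Re (cinner (snd x) (snd x)) = (norm (snd x))\<^sup>2"
    using cinner_ge_zero[of "snd x"] by (simp add: norm_eq_sqrt_cinner)
  have i1: "Im (cinner (fst x) (fst x)) = 0"
    using cinner_cnj[of "fst x" "fst x"] by (metis cnj.sel(2) neg_equal_zero)
  have i2: "Im (cinner (snd x) (snd x)) = 0"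
    using cinner_cnj[of "snd x" "snd x"] by (metis cnj.sel(2) neg_equal_zero)
  show "cinner x x = 0 \<longleftrightarrow> x = 0"
  proof
    assume "cinner x x = 0"
    then have "Re (cinner x x) = 0" by simp
    then have "(norm (fst x))\<^sup>2 + (norm (snd x))\<^sup>2 = 0"
      using n1 n2 by (simp add: cinner_prod_def)
    then have "fst x = 0" "snd x = 0"
      by (simp_all add: add_nonneg_eq_0_iff)
    then show "x = 0" by (simp add: prod_eq_iff)
  next
    assume "x = 0"
    then show "cinner x x = 0"
      using cinner_eq_zero_iff[of "0::'a"] cinner_eq_zero_iff[of "0::'b"]
      by (simp add: cinner_prod_def)
  qed
  show "norm x = sqrt (Re (cinner x x))"
    using n1 n2 by (simp add: cinner_prod_def norm_prod_def)
qed

end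

instance prod :: (chilbert_space, chilbert_space) chilbert_space ..

definition clinear :: "('a::complex_inner \<Rightarrow> 'b::complex_inner) \<Rightarrow> bool" where
  "clinear f \<longleftrightarrow> (\<forall>x y. f (x + y) = f x + f y) \<and> (\<forall>c x. f (c *\<^sub>C x) = c *\<^sub>C f x)"

definition bounded_clinear :: "('a::complex_inner \<Rightarrow> 'b::complex_inner) \<Rightarrow> bool" where
  "bounded_clinear f \<longleftrightarrow> clinear f \<and> (\<exists>K. \<forall>x. norm (f x) \<le> norm x * K)"

definition csubspace :: "'a::complex_inner set \<Rightarrow> bool" where
  "csubspace S \<longleftrightarrow> 0 \<in> S \<and> (\<forall>x\<in>S. \<forall>y\<in>S. x + y \<in> S) \<and> (\<forall>c. \<forall>x\<in>S. c *\<^sub>C x \<in> S)"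

definition closed_csubspace :: "'a::complex_inner set \<Rightarrow> bool" where
  "closed_csubspace S \<longleftrightarrow> csubspace S \<and> closed S"

definition cspan :: "'a::complex_inner set \<Rightarrow> 'a set" where
  "cspan X = \<Inter> {S. csubspace S \<and> X \<subseteq> S}"

definition adjoint :: "('a::complex_inner \<Rightarrow> 'b::complex_inner) \<Rightarrow> ('b \<Rightarrow> 'a)" where
  "adjoint A = (THE B. \<forall>x y. cinner (A x) y = cinner x (B y))"

definition proj :: "'a::complex_inner set \<Rightarrow> 'a \<Rightarrow> 'a" where
  "proj S x = (THE y. y \<in> S \<and> (\<forall>z\<in>S. cinner z (x - y) = 0))"

definition comm_inv_subspace ::
  "nat \<Rightarrow> (nat \<Rightarrow> 'a::complex_inner \<Rightarrow> 'a) \<Rightarrow> 'a set \<Rightarrow> bool" where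
  "comm_inv_subspace n R S \<longleftrightarrow> closed_csubspace S
     \<and> (\<forall>i<n. adjoint (R i) ` S \<subseteq> S)
     \<and> (\<forall>h\<in>S. \<forall>i<n. \<forall>j<n. adjoint (R i) (adjoint (R j) h) = adjoint (R j) (adjoint (R i) h))"

definition max_comm_space :: "nat \<Rightarrow> (nat \<Rightarrow> 'a::complex_inner \<Rightarrow> 'a) \<Rightarrow> 'a set" where
  "max_comm_space n R =
     (THE S. comm_inv_subspace n R S \<and> (\<forall>S'. comm_inv_subspace n R S' \<longrightarrow> S' \<subseteq> S))"

text \<open>The i-th component of the maximal commuting piece, P R_i restricted to the
  space (its values are only relevant on max_comm_space n R).\<close>
definition max_comm_piece ::
  "nat \<Rightarrow> (nat \<Rightarrow> 'a::complex_inner \<Rightarrow> 'a) \<Rightarrow> nat \<Rightarrow> 'a \<Rightarrow> 'a" where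
  "max_comm_piece n R i = (\<lambda>x. proj (max_comm_space n R) (R i x))"

definition dsum_op :: "('a \<Rightarrow> 'a) \<Rightarrow> ('b \<Rightarrow> 'b) \<Rightarrow> ('a \<times> 'b \<Rightarrow> 'a \<times> 'b)" where
  "dsum_op A B = (\<lambda>(x, y). (A x, B y))"

text \<open>tp realises 'c as the Hilbert tensor product of 'a and 'b:
  tp is bilinear, multiplicative on inner products, and elementary tensors
  have dense span.\<close>
definition hilbert_tensor :: "('a::complex_inner \<Rightarrow> 'b::complex_inner \<Rightarrow> 'c::complex_inner) \<Rightarrow> bool" where
  "hilbert_tensor tp \<longleftrightarrow>
     (\<forall>y. clinear (\<lambda>x. tp x y)) \<and> (\<forall>x. clinear (\<lambda>y. tp x y))
     \<and> (\<forall>x x' y y'. cinner (tp x y) (tp x' y') = cinner x x' * cinner y y')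
     \<and> closure (cspan {tp x y | x y. True}) = UNIV"

text \<open>A is the operator R \<otimes> I on the tensor product realised by tp.\<close>
definition is_tensor_id :: "('a::complex_inner \<Rightarrow> 'b::complex_inner \<Rightarrow> 'c::complex_inner)
    \<Rightarrow> ('a \<Rightarrow> 'a) \<Rightarrow> ('c \<Rightarrow> 'c) \<Rightarrow> bool" where
  "is_tensor_id tp R A \<longleftrightarrow> bounded_clinear A \<and> (\<forall>x y. A (tp x y) = tp (R x) y)"

end

theory Submission
  imports Defs
begin

(* The adjoint of R_i \<oplus> T_i is R_i^* \<oplus> T_i^*, and the adjoint of R_i \<otimes> I is R_i^* \<otimes> I.
   If a map P satisfies P S_i^* = R_i^* P for all i, then the closed span of the image under P
   of the maximal commuting space of S is invariant under the R_i^*, which commute on it;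
   so P maps the maximal commuting space of S into that of R.

   For the direct sum, the coordinate projections give one inclusion, and L^c \<oplus> M^c is
   invariant and commuting, which gives the other. For the tensor product, x \<mapsto> x \<otimes> y
   gives L^c \<otimes> M \<subseteq> (L \<otimes> M)^c. Conversely the slices h \<mapsto> (\<cdot> \<otimes> y)^* h map (L \<otimes> M)^c
   into L^c, and a vector all of whose slices lie in L^c belongs to L^c \<otimes> M. The formulas
   for the pieces follow because the projection onto L^c \<oplus> M^c is P_{L^c} \<oplus> P_{M^c} and the
   projection onto L^c \<otimes> M acts on elementary tensors as P_{L^c} \<otimes> I. *)

section \<open>Complex inner product spaces\<close>

lemma scaleC_minus_one: "(-1::complex) *\<^sub>C (x::'a::complex_inner) = - x"
  by (metis of_real_1 of_real_minus scaleR_minus1_left scaleR_scaleC)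

lemma cinner_add_left: "cinner (x + y) (z::'a::complex_inner) = cinner x z + cinner y z"
  by (metis cinner_add_right cinner_cnj complex_cnj_add)

lemma cinner_scaleC_left: "cinner (a *\<^sub>C x) (z::'a::complex_inner) = cnj a * cinner x z"
  by (metis cinner_cnj cinner_scaleC_right complex_cnj_mult)

lemma cinner_zero_left [simp]: "cinner (0::'a::complex_inner) x = 0"
  using cinner_add_left[of 0 0 x] by simp

lemma cinner_diff_right: "cinner x (y - z::'a::complex_inner) = cinner x y - cinner x z"
  using cinner_add_right[of x "y - z" z] by (simp add: eq_diff_eq)

lemma cinner_diff_left: "cinner (x - y) (z::'a::complex_inner) = cinner x z - cinner y z"
  using cinner_add_left[of "x - y" y z] by (simp add: eq_diff_eq)

lemma cinner_eq_zero_commute: "cinner x y = 0 \<longleftrightarrow> cinner y (x::'a::complex_inner) = 0"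
  by (metis cinner_cnj complex_cnj_zero_iff)

lemma cinner_self_eq_norm: "cinner x (x::'a::complex_inner) = complex_of_real ((norm x)\<^sup>2)"
proof -
  have "Im (cinner x x) = 0"
    by (metis cinner_cnj cnj.sel(2) neg_equal_zero)
  then show ?thesis
    by (simp add: complex_eq_iff norm_eq_sqrt_cinner cinner_ge_zero)
qed

lemma power2_norm_eq_cinner: "(norm x)\<^sup>2 = Re (cinner x (x::'a::complex_inner))"
  by (simp add: norm_eq_sqrt_cinner cinner_ge_zero)

lemma cinner_left_ext: "(\<And>x. cinner x a = cinner x (b::'a::complex_inner)) \<Longrightarrow> a = b"
  by (metis cinner_diff_right cinner_eq_zero_iff right_minus_eq)

lemma power2_norm_diff_component:
  fixes w z :: "'a::complex_inner"
  assumes "z \<noteq> 0"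
  shows "(norm (w - (cinner z w / cinner z z) *\<^sub>C z))\<^sup>2
    = (norm w)\<^sup>2 - (cmod (cinner z w))\<^sup>2 / (norm z)\<^sup>2"
proof -
  define c where "c = cinner z w"
  define m where "m = (norm z)\<^sup>2"
  define t where "t = c / cinner z z"
  have "m \<noteq> 0" using assms by (simp add: m_def)
  have zz: "cinner z z = of_real m" by (simp add: cinner_self_eq_norm m_def)
  have wz: "cinner w z = cnj c" by (simp add: c_def flip: cinner_cnj)
  have "cinner (w - t *\<^sub>C z) (w - t *\<^sub>C z)
      = cinner w w - t * cnj c - cnj t * c + cnj t * t * of_real m"
    by (simp add: cinner_diff_left cinner_diff_right cinner_scaleC_left cinner_scaleC_right
        zz wz flip: c_def) (simp add: algebra_simps)
  also have "\<dots> = cinner w w - (c * cnj c) / of_real m"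
    using \<open>m \<noteq> 0\<close> by (simp add: t_def zz field_simps)
  also have "\<dots> = of_real ((norm w)\<^sup>2 - (cmod c)\<^sup>2 / m)"
    by (simp only: cinner_self_eq_norm complex_norm_square of_real_diff of_real_divide)
  finally have "complex_of_real ((norm (w - t *\<^sub>C z))\<^sup>2) = of_real ((norm w)\<^sup>2 - (cmod c)\<^sup>2 / m)"
    by (simp only: cinner_self_eq_norm)
  then show ?thesis
    unfolding t_def c_def m_def of_real_eq_iff .
qed

lemma norm_cinner_le: "cmod (cinner x y) \<le> norm x * norm (y::'a::complex_inner)"
proof (cases "x = 0")
  case False
  then have "norm x > 0" by simp
  have "(cmod (cinner x y))\<^sup>2 / (norm x)\<^sup>2 \<le> (norm y)\<^sup>2"
    using power2_norm_diff_component[OF False, of y] zero_le_power2 by (smt (verit))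
  then have "(cmod (cinner x y))\<^sup>2 \<le> (norm x * norm y)\<^sup>2"
    using \<open>norm x > 0\<close> by (simp add: divide_le_eq power_mult_distrib mult.commute)
  then show ?thesis
    by (rule power2_le_imp_le) simp
qed simp

lemma parallelogram_law:
  "(norm (a + b))\<^sup>2 + (norm (a - b))\<^sup>2 = 2 * (norm a)\<^sup>2 + 2 * (norm (b::'a::complex_inner))\<^sup>2"
  by (simp add: power2_norm_eq_cinner cinner_add_left cinner_add_right cinner_diff_left
      cinner_diff_right)

lemma norm_scaleC: "norm (c *\<^sub>C (x::'a::complex_inner)) = cmod c * norm x"
proof -
  have "cinner (c *\<^sub>C x) (c *\<^sub>C x) = cnj c * c * cinner x x"
    by (simp add: cinner_scaleC_left cinner_scaleC_right)
  also have "\<dots> = of_real ((cmod c * norm x)\<^sup>2)"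
    by (simp add: cinner_self_eq_norm power_mult_distrib complex_norm_square ac_simps
        del: of_real_power)
  finally show ?thesis
    by (simp add: cinner_self_eq_norm power2_eq_iff_nonneg del: of_real_power)
qed

lemma continuous_on_cinner_left: "continuous_on UNIV (\<lambda>x. cinner x (z::'a::complex_inner))"
proof (rule linear_continuous_on, rule bounded_linear_intro[where K = "norm z"])
  show "cinner (r *\<^sub>R x) z = r *\<^sub>R cinner x z" for r x
    by (simp add: scaleR_scaleC cinner_scaleC_left scaleR_conv_of_real)
  show "norm (cinner x z) \<le> norm x * norm z" for x
    by (rule norm_cinner_le)
qed (rule cinner_add_left)

section \<open>Bounded complex-linear maps and closed subspaces\<close>

lemma clinear_imp_linear: "clinear f \<Longrightarrow> linear f"
  by (rule linearI) (simp_all add: clinear_def scaleR_scaleC)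

lemma bounded_clinear_iff: "bounded_clinear f \<longleftrightarrow> clinear f \<and> bounded_linear f"
proof
  assume f: "bounded_clinear f"
  then obtain K where "\<forall>x. norm (f x) \<le> norm x * K" by (auto simp: bounded_clinear_def)
  with f show "clinear f \<and> bounded_linear f"
    by (auto simp: bounded_clinear_def clinear_imp_linear bounded_linear_axioms_def
        bounded_linear_def)
next
  assume "clinear f \<and> bounded_linear f"
  then show "bounded_clinear f"
    by (auto simp: bounded_clinear_def dest: bounded_linear.bounded)
qed

lemma bounded_clinear_compose:
  "bounded_clinear f \<Longrightarrow> bounded_clinear g \<Longrightarrow> bounded_clinear (\<lambda>x. f (g x))"
  by (simp add: bounded_clinear_iff bounded_linear_compose) (simp add: clinear_def)

lemma bounded_clinear_zero: "bounded_clinear f \<Longrightarrow> f 0 = 0"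
  by (simp add: bounded_clinear_iff linear_0 bounded_linear.linear)

lemma bounded_linear_scaleC: "bounded_linear (\<lambda>x::'a::complex_inner. c *\<^sub>C x)"
  by (rule bounded_linear_intro[where K = "cmod c"])
    (simp_all add: scaleC_add_right scaleR_scaleC scaleC_scaleC mult.commute norm_scaleC)

lemma csubspace_diff: "csubspace S \<Longrightarrow> x \<in> S \<Longrightarrow> y \<in> S \<Longrightarrow> x - y \<in> S"
  unfolding csubspace_def by (metis diff_conv_add_uminus scaleC_minus_one)

lemma csubspace_closure:
  assumes "csubspace S"
  shows "csubspace (closure S)"
  unfolding csubspace_def
proof (intro conjI ballI allI)
  show "0 \<in> closure S"
    using assms closure_subset by (auto simp: csubspace_def)
  fix x y c assume "x \<in> closure S" "y \<in> closure S"
  then obtain a b where "\<forall>k. a k \<in> S" "a \<longlonglongrightarrow> x" "\<forall>k. b k \<in> S" "b \<longlonglongrightarrow> y"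
    by (meson closure_sequential)
  moreover have "\<forall>k. a k + b k \<in> S" "\<forall>k. c *\<^sub>C a k \<in> S"
    using assms calculation by (simp_all add: csubspace_def)
  moreover have "(\<lambda>k. a k + b k) \<longlonglongrightarrow> x + y" "(\<lambda>k. c *\<^sub>C a k) \<longlonglongrightarrow> c *\<^sub>C x"
    using calculation
    by (simp_all add: tendsto_add bounded_linear.tendsto[OF bounded_linear_scaleC])
  ultimately show "x + y \<in> closure S" "c *\<^sub>C x \<in> closure S"
    unfolding closure_sequential by (metis (lifting))+
qed

lemma cspan_superset: "X \<subseteq> cspan X"
  unfolding cspan_def by auto

lemma csubspace_cspan: "csubspace (cspan X)"
  unfolding cspan_def csubspace_def by auto

lemma closed_csubspace_closure_cspan: "closed_csubspace (closure (cspan X))"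
  by (simp add: closed_csubspace_def csubspace_closure csubspace_cspan)

lemma closure_cspan_superset: "X \<subseteq> closure (cspan X)"
  using cspan_superset closure_subset by blast

lemma closure_cspan_least: "closed_csubspace V \<Longrightarrow> X \<subseteq> V \<Longrightarrow> closure (cspan X) \<subseteq> V"
  unfolding closed_csubspace_def by (metis closure_minimal cspan_def Inf_lower mem_Collect_eq)

lemma closed_csubspace_vimage:
  assumes "bounded_clinear f" "closed_csubspace S"
  shows "closed_csubspace (f -` S)"
proof -
  have "continuous_on UNIV f"
    using assms(1) by (simp add: bounded_clinear_iff linear_continuous_on)
  then have "closed (f -` S)"
    using assms(2) by (simp add: closed_csubspace_def closed_vimage)
  moreover have "csubspace (f -` S)"
    using assms bounded_clinear_zero[OF assms(1)]
    by (simp add: closed_csubspace_def csubspace_def bounded_clinear_def clinear_def)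
  ultimately show ?thesis by (simp add: closed_csubspace_def)
qed

lemma closed_csubspace_eq:
  assumes "bounded_clinear f" "bounded_clinear g"
  shows "closed_csubspace {x. f x = g x}"
proof -
  have "closed {x. f x = g x}"
    using assms
    by (intro closed_Collect_eq) (simp_all add: bounded_clinear_iff linear_continuous_on)
  then show ?thesis
    using assms
    by (simp add: closed_csubspace_def csubspace_def bounded_clinear_zero)
      (simp add: bounded_clinear_def clinear_def)
qed

lemma closed_csubspace_orthogonal: "closed_csubspace {x::'a::complex_inner. cinner x v = 0}"
proof -
  have "closed {x::'a. cinner x v = 0}"
    by (intro closed_Collect_eq continuous_on_cinner_left continuous_on_const)
  then show ?thesis
    by (simp add: closed_csubspace_def csubspace_def cinner_add_left cinner_scaleC_left)
qed

lemma orthogonal_dense_eq_zero: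
  assumes "closure (cspan X) = UNIV" "\<forall>x\<in>X. cinner x v = 0"
  shows "v = 0"
proof -
  have "closure (cspan X) \<subseteq> {x. cinner x v = 0}"
    using assms(2) by (intro closure_cspan_least closed_csubspace_orthogonal) auto
  then show ?thesis
    using assms(1) cinner_eq_zero_iff by auto
qed

section \<open>Orthogonal projections\<close>

text \<open>The midpoint of s m and s k lies in S, so by the parallelogram law
  both are close to each other once both are nearly minimal.\<close>
lemma minimizing_sequence_Cauchy:
  assumes S: "csubspace S" and sS: "\<And>k. s k \<in> S"
    and D: "\<And>z. z \<in> S \<Longrightarrow> D \<le> (norm (x - z))\<^sup>2"
    and sD: "\<And>k. (norm (x - s k))\<^sup>2 < D + 1 / real (Suc k)"
  shows "Cauchy s"
proof (rule metric_CauchyI)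
  have bound: "(norm (s m - s k))\<^sup>2 \<le> 2 / real (Suc m) + 2 / real (Suc k)" for m k
  proof -
    have "(1/2 :: real) *\<^sub>R (s m + s k) \<in> S"
      using S sS by (simp add: csubspace_def scaleR_scaleC)
    then have "4 * D \<le> 4 * (norm (x - (1/2 :: real) *\<^sub>R (s m + s k)))\<^sup>2"
      using D by simp
    also have "\<dots> = (norm ((x - s m) + (x - s k)))\<^sup>2"
    proof -
      have "(x - s m) + (x - s k) = 2 *\<^sub>R (x - (1/2 :: real) *\<^sub>R (s m + s k))"
        by (simp add: algebra_simps scaleR_2)
      then show ?thesis by (simp add: power_mult_distrib)
    qed
    finally have "4 * D \<le> (norm ((x - s m) + (x - s k)))\<^sup>2" .
    then show ?thesis
      using parallelogram_law[of "x - s m" "x - s k"] sD[of m] sD[of k]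
      by (simp add: norm_minus_commute)
  qed
  fix e :: real assume "e > 0"
  obtain M :: nat where "4 / e\<^sup>2 < real M"
    using reals_Archimedean2 by blast
  then have "4 < e\<^sup>2 * real (Suc M)"
    using \<open>e > 0\<close> by (simp add: divide_less_eq algebra_simps add_strict_increasing)
  then have "4 / real (Suc M) < e\<^sup>2"
    by (simp add: divide_less_eq)
  show "\<exists>M. \<forall>m\<ge>M. \<forall>k\<ge>M. dist (s m) (s k) < e"
  proof (intro exI allI impI)
    fix m k assume "M \<le> m" "M \<le> k"
    then have "2 / real (Suc m) \<le> 2 / real (Suc M)" "2 / real (Suc k) \<le> 2 / real (Suc M)"
      by (simp_all add: frac_le)
    then have "(norm (s m - s k))\<^sup>2 < e\<^sup>2"
      using bound[of m k] \<open>4 / real (Suc M) < e\<^sup>2\<close> by simp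
    then show "dist (s m) (s k) < e"
      using \<open>e > 0\<close> by (simp add: dist_norm power_less_imp_less_base)
  qed
qed

lemma nearest_point_exists:
  fixes S :: "'a::chilbert_space set"
  assumes "closed_csubspace S"
  shows "\<exists>y\<in>S. \<forall>z\<in>S. norm (x - y) \<le> norm (x - z)"
proof -
  have S: "csubspace S" "closed S"
    using assms by (simp_all add: closed_csubspace_def)
  define dists where "dists = (\<lambda>z. (norm (x - z))\<^sup>2) ` S"
  define D where "D = Inf dists"
  have "dists \<noteq> {}" "bdd_below dists"
    using S by (auto simp: dists_def csubspace_def intro: bdd_belowI[of _ 0])
  then have D: "D \<le> (norm (x - z))\<^sup>2" if "z \<in> S" for z
    using that by (auto simp: D_def dists_def intro: cInf_lower)
  have "\<exists>z\<in>S. (norm (x - z))\<^sup>2 < D + 1 / real (Suc k)" for k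
    using cInf_less_iff[OF \<open>dists \<noteq> {}\<close> \<open>bdd_below dists\<close>, of "D + 1 / real (Suc k)"]
    by (simp add: D_def dists_def)
  then obtain s where sS: "\<And>k. s k \<in> S" and sD: "\<And>k. (norm (x - s k))\<^sup>2 < D + 1 / real (Suc k)"
    by metis
  obtain y where lim: "s \<longlonglongrightarrow> y"
    using minimizing_sequence_Cauchy[OF S(1) sS D sD] Cauchy_convergent_iff convergent_def by blast
  have "y \<in> S"
    using closed_sequentially[OF S(2)] sS lim by blast
  moreover have "(norm (x - y))\<^sup>2 \<le> D"
  proof (rule LIMSEQ_le)
    show "(\<lambda>k. (norm (x - s k))\<^sup>2) \<longlonglongrightarrow> (norm (x - y))\<^sup>2"
      by (intro tendsto_intros lim)
    show "(\<lambda>k. D + 1 / real (Suc k)) \<longlonglongrightarrow> D"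
      using tendsto_add[OF tendsto_const LIMSEQ_inverse_real_of_nat]
      by (simp add: inverse_eq_divide)
  qed (use sD less_imp_le in blast)
  ultimately show ?thesis
    using D by (meson norm_ge_zero order_trans power2_le_imp_le)
qed

lemma orthogonal_at_nearest_point:
  assumes S: "csubspace S" and "y \<in> S" "z \<in> S"
    and nearest: "\<forall>s\<in>S. norm (x - y) \<le> norm (x - s)"
  shows "cinner z (x - y) = 0"
proof (cases "z = 0")
  case False
  define t where "t = cinner z (x - y) / cinner z z"
  have "y + t *\<^sub>C z \<in> S"
    using S \<open>y \<in> S\<close> \<open>z \<in> S\<close> by (simp add: csubspace_def)
  then have "(norm (x - y))\<^sup>2 \<le> (norm ((x - y) - t *\<^sub>C z))\<^sup>2"
    using nearest by (simp add: diff_diff_eq)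
  also have "\<dots> = (norm (x - y))\<^sup>2 - (cmod (cinner z (x - y)))\<^sup>2 / (norm z)\<^sup>2"
    unfolding t_def by (rule power2_norm_diff_component[OF False])
  finally show ?thesis
    using False by (simp add: divide_le_0_iff)
qed simp

lemma proj_unique:
  assumes S: "csubspace S"
    and "y \<in> S" "\<forall>z\<in>S. cinner z (x - y) = 0"
    and "y' \<in> S" "\<forall>z\<in>S. cinner z (x - y') = 0"
  shows "y = (y'::'a::complex_inner)"
proof -
  have "y - y' \<in> S"
    using S assms(2,4) by (rule csubspace_diff)
  then have "cinner (y - y') ((x - y') - (x - y)) = 0"
    using assms(3,5) by (simp add: cinner_diff_right)
  then have "cinner (y - y') (y - y') = 0"
    by simp
  then show ?thesis
    by (simp add: cinner_eq_zero_iff)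
qed

lemma proj_in_and_orthogonal:
  fixes S :: "'a::chilbert_space set"
  assumes "closed_csubspace S"
  shows "proj S x \<in> S \<and> (\<forall>z\<in>S. cinner z (x - proj S x) = 0)"
proof -
  have S: "csubspace S"
    using assms by (simp add: closed_csubspace_def)
  obtain y where "y \<in> S" "\<forall>z\<in>S. norm (x - y) \<le> norm (x - z)"
    using nearest_point_exists[OF assms] by blast
  then have y: "y \<in> S" "\<forall>z\<in>S. cinner z (x - y) = 0"
    using orthogonal_at_nearest_point[OF S] by blast+
  have "proj S x = y"
    unfolding proj_def
  proof (rule the_equality)
    fix y' assume "y' \<in> S \<and> (\<forall>z\<in>S. cinner z (x - y') = 0)"
    then show "y' = y"
      using proj_unique[OF S _ _ y] by blast
  qed (use y in blast)
  then show ?thesis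
    using y by simp
qed

lemma proj_in: "closed_csubspace S \<Longrightarrow> proj S (x::'a::chilbert_space) \<in> S"
  using proj_in_and_orthogonal by blast

lemma proj_orthogonal:
  "closed_csubspace S \<Longrightarrow> z \<in> S \<Longrightarrow> cinner z (x - proj S (x::'a::chilbert_space)) = 0"
  using proj_in_and_orthogonal by blast

lemma proj_eqI:
  fixes S :: "'a::chilbert_space set"
  assumes "closed_csubspace S" "y \<in> S" "\<And>z. z \<in> S \<Longrightarrow> cinner z (x - y) = 0"
  shows "proj S x = y"
proof (rule proj_unique)
  show "csubspace S"
    using assms(1) by (simp add: closed_csubspace_def)
  show "proj S x \<in> S" "\<forall>z\<in>S. cinner z (x - proj S x) = 0"
    using proj_in_and_orthogonal[OF assms(1)] by blast+
qed (use assms in blast)+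

section \<open>Adjoints\<close>

text \<open>The representing vector is a multiple of any w orthogonal to the kernel of f,
  because f(x) w - f(w) x lies in the kernel for every x.\<close>
lemma riesz_representation:
  fixes f :: "'a::chilbert_space \<Rightarrow> complex"
  assumes add: "\<And>x y. f (x + y) = f x + f y" and scale: "\<And>c x. f (c *\<^sub>C x) = c * f x"
    and bounded: "\<And>x. cmod (f x) \<le> norm x * K"
  shows "\<exists>z. \<forall>x. f x = cinner z x"
proof (cases "\<forall>x. f x = 0")
  case False
  have "bounded_linear f"
    by (rule bounded_linear_intro[where K = K])
      (simp_all add: add scale scaleR_scaleC scaleR_conv_of_real bounded)
  then have f0: "f 0 = 0" and f_diff: "\<And>x y. f (x - y) = f x - f y"
    by (simp_all add: linear_0 linear_diff bounded_linear.linear)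
  define ker where "ker = {x. f x = 0}"
  have "closed_csubspace ker"
  proof -
    have "closed ker"
      unfolding ker_def using \<open>bounded_linear f\<close>
      by (intro closed_Collect_eq continuous_on_const linear_continuous_on)
    then show ?thesis
      by (simp add: closed_csubspace_def csubspace_def ker_def f0 add scale)
  qed
  from False obtain x0 where "f x0 \<noteq> 0" by blast
  define w where "w = x0 - proj ker x0"
  have "f w = f x0"
    using proj_in[OF \<open>closed_csubspace ker\<close>, of x0] by (simp add: w_def ker_def f_diff)
  then have "cinner w w \<noteq> 0"
    using \<open>f x0 \<noteq> 0\<close> f0 cinner_eq_zero_iff by metis
  have key: "f x * cinner w w = f w * cinner w x" for x
  proof -
    have "f (f x *\<^sub>C w - f w *\<^sub>C x) = 0"
      by (simp add: f_diff scale)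
    then have "cinner (f x *\<^sub>C w - f w *\<^sub>C x) w = 0"
      using proj_orthogonal[OF \<open>closed_csubspace ker\<close>] by (simp add: ker_def w_def)
    then show ?thesis
      by (simp add: cinner_eq_zero_commute[of _ w] cinner_diff_right cinner_scaleC_right)
  qed
  have "f x = cinner (cnj (f w / cinner w w) *\<^sub>C w) x" for x
    using key[of x] \<open>cinner w w \<noteq> 0\<close> by (simp add: cinner_scaleC_left field_simps)
  then show ?thesis by blast
qed (metis cinner_zero_left)

lemma adjoint_exists:
  fixes A :: "'a::chilbert_space \<Rightarrow> 'b::complex_inner"
  assumes A: "bounded_clinear A"
  shows "\<exists>B. \<forall>x y. cinner (A x) y = cinner x (B y)"
proof -
  obtain K where K: "\<And>x. norm (A x) \<le> norm x * K"
    using A by (auto simp: bounded_clinear_def)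
  have "\<exists>z. \<forall>x. cinner y (A x) = cinner z x" for y
  proof (rule riesz_representation[where K = "norm y * K"])
    show "cinner y (A (x1 + x2)) = cinner y (A x1) + cinner y (A x2)" for x1 x2
      using A by (simp add: bounded_clinear_def clinear_def cinner_add_right)
    show "cinner y (A (c *\<^sub>C x)) = c * cinner y (A x)" for c x
      using A by (simp add: bounded_clinear_def clinear_def cinner_scaleC_right)
    show "cmod (cinner y (A x)) \<le> norm x * (norm y * K)" for x
      using norm_cinner_le[of y "A x"] mult_left_mono[OF K[of x] norm_ge_zero[of y]]
      by (simp add: algebra_simps)
  qed
  then obtain B where "\<forall>y x. cinner y (A x) = cinner (B y) x"
    by metis
  then have "\<forall>x y. cinner (A x) y = cinner x (B y)"
    by (metis cinner_cnj)
  then show ?thesis by blast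
qed

lemma adjoint_eqI:
  assumes "\<And>x y. cinner (A x) y = cinner x (B y)"
  shows "adjoint A = B"
  unfolding adjoint_def
proof (rule the_equality)
  fix B' assume "\<forall>x y. cinner (A x) y = cinner x (B' y)"
  then show "B' = B"
    using assms by (metis cinner_left_ext ext)
qed (use assms in blast)

lemma cinner_adjoint:
  fixes A :: "'a::chilbert_space \<Rightarrow> 'b::complex_inner"
  assumes "bounded_clinear A"
  shows "cinner (A x) y = cinner x (adjoint A y)"
  using adjoint_exists[OF assms] adjoint_eqI by metis

lemma bounded_clinear_adjoint:
  fixes A :: "'a::chilbert_space \<Rightarrow> 'b::complex_inner"
  assumes A: "bounded_clinear A"
  shows "bounded_clinear (adjoint A)"
proof -
  have "bounded_linear A"
    using A by (simp add: bounded_clinear_iff)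
  then obtain K where "K > 0" and K: "\<And>x. norm (A x) \<le> norm x * K"
    using bounded_linear.pos_bounded by blast
  have "norm (adjoint A y) \<le> norm y * K" for y
  proof -
    let ?b = "adjoint A y"
    have "(norm ?b)\<^sup>2 = Re (cinner (A ?b) y)"
      by (simp add: power2_norm_eq_cinner cinner_adjoint[OF A])
    also have "\<dots> \<le> norm (A ?b) * norm y"
      by (rule order_trans[OF complex_Re_le_cmod norm_cinner_le])
    also have "\<dots> \<le> norm ?b * (norm y * K)"
      using mult_right_mono[OF K[of ?b] norm_ge_zero[of y]] by (simp add: algebra_simps)
    finally have "norm ?b * norm ?b \<le> norm ?b * (norm y * K)"
      by (simp add: power2_eq_square)
    then show ?thesis
      using \<open>K > 0\<close> by (cases "?b = 0") simp_all
  qed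
  moreover have "adjoint A (y + y') = adjoint A y + adjoint A y'" for y y'
    by (rule cinner_left_ext) (simp add: cinner_adjoint[OF A, symmetric] cinner_add_right)
  moreover have "adjoint A (c *\<^sub>C y) = c *\<^sub>C adjoint A y" for c y
    by (rule cinner_left_ext) (simp add: cinner_adjoint[OF A, symmetric] cinner_scaleC_right)
  ultimately show ?thesis
    unfolding bounded_clinear_def clinear_def by blast
qed

lemma adjoint_compose:
  fixes A :: "'b::chilbert_space \<Rightarrow> 'c::complex_inner" and B :: "'a::chilbert_space \<Rightarrow> 'b"
  assumes "bounded_clinear A" "bounded_clinear B"
  shows "adjoint (\<lambda>x. A (B x)) = (\<lambda>y. adjoint B (adjoint A y))"
  by (rule adjoint_eqI) (simp add: cinner_adjoint assms)

section \<open>The maximal commuting subspace\<close>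

lemma comm_inv_subspace_closure_cspan:
  fixes R :: "nat \<Rightarrow> 'a::chilbert_space \<Rightarrow> 'a"
  assumes R: "\<forall>i<n. bounded_clinear (R i)"
    and invariant: "\<And>i. i < n \<Longrightarrow> adjoint (R i) ` X \<subseteq> X"
    and commute: "\<And>i j x. i < n \<Longrightarrow> j < n \<Longrightarrow> x \<in> X
        \<Longrightarrow> adjoint (R i) (adjoint (R j) x) = adjoint (R j) (adjoint (R i) x)"
  shows "comm_inv_subspace n R (closure (cspan X))"
proof -
  have adj: "bounded_clinear (adjoint (R i))" if "i < n" for i
    using R that by (simp add: bounded_clinear_adjoint)
  have "closure (cspan X) \<subseteq> adjoint (R i) -` closure (cspan X)" if "i < n" for i
  proof (rule closure_cspan_least)
    show "closed_csubspace (adjoint (R i) -` closure (cspan X))"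
      using adj[OF that] closed_csubspace_closure_cspan by (rule closed_csubspace_vimage)
    show "X \<subseteq> adjoint (R i) -` closure (cspan X)"
      using invariant[OF that] closure_cspan_superset[of X] by blast
  qed
  moreover have "closure (cspan X)
      \<subseteq> {h. adjoint (R i) (adjoint (R j) h) = adjoint (R j) (adjoint (R i) h)}"
    if "i < n" "j < n" for i j
  proof (rule closure_cspan_least)
    show "closed_csubspace {h. adjoint (R i) (adjoint (R j) h) = adjoint (R j) (adjoint (R i) h)}"
      using adj that by (simp add: closed_csubspace_eq bounded_clinear_compose)
    show "X \<subseteq> {h. adjoint (R i) (adjoint (R j) h) = adjoint (R j) (adjoint (R i) h)}"
      using commute[OF that] by blast
  qed
  ultimately show ?thesis
    unfolding comm_inv_subspace_def using closed_csubspace_closure_cspan by blast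
qed

lemma max_comm_space_greatest:
  fixes R :: "nat \<Rightarrow> 'a::chilbert_space \<Rightarrow> 'a"
  assumes R: "\<forall>i<n. bounded_clinear (R i)"
  shows "comm_inv_subspace n R (max_comm_space n R)
    \<and> (\<forall>S. comm_inv_subspace n R S \<longrightarrow> S \<subseteq> max_comm_space n R)"
proof -
  define X where "X = \<Union>{S. comm_inv_subspace n R S}"
  have X: "comm_inv_subspace n R (closure (cspan X))"
    by (rule comm_inv_subspace_closure_cspan[OF R]) (auto simp: X_def comm_inv_subspace_def)
  have greatest: "S \<subseteq> closure (cspan X)" if "comm_inv_subspace n R S" for S
    using that closure_cspan_superset[of X] by (auto simp: X_def)
  have "max_comm_space n R = closure (cspan X)"
    unfolding max_comm_space_def
  proof (rule the_equality)
    fix M assume "comm_inv_subspace n R M \<and> (\<forall>S. comm_inv_subspace n R S \<longrightarrow> S \<subseteq> M)"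
    then show "M = closure (cspan X)"
      using X greatest by blast
  qed (use X greatest in blast)
  then show ?thesis
    using X greatest by simp
qed

lemma comm_inv_subspace_max_comm_space:
  fixes R :: "nat \<Rightarrow> 'a::chilbert_space \<Rightarrow> 'a"
  assumes "\<forall>i<n. bounded_clinear (R i)"
  shows "comm_inv_subspace n R (max_comm_space n R)"
  using max_comm_space_greatest[OF assms] by blast

lemma comm_inv_subspace_le_max_comm_space:
  fixes R :: "nat \<Rightarrow> 'a::chilbert_space \<Rightarrow> 'a"
  assumes "\<forall>i<n. bounded_clinear (R i)" "comm_inv_subspace n R S"
  shows "S \<subseteq> max_comm_space n R"
  using max_comm_space_greatest[OF assms(1)] assms(2) by blast

lemma closed_csubspace_max_comm_space:
  fixes R :: "nat \<Rightarrow> 'a::chilbert_space \<Rightarrow> 'a"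
  assumes "\<forall>i<n. bounded_clinear (R i)"
  shows "closed_csubspace (max_comm_space n R)"
  using comm_inv_subspace_max_comm_space[OF assms] by (simp add: comm_inv_subspace_def)

lemma intertwiner_image_max_comm_space:
  fixes R :: "nat \<Rightarrow> 'a::chilbert_space \<Rightarrow> 'a" and S :: "nat \<Rightarrow> 'b::chilbert_space \<Rightarrow> 'b"
  assumes R: "\<forall>i<n. bounded_clinear (R i)" and S: "\<forall>i<n. bounded_clinear (S i)"
    and intertwines: "\<And>i y. i < n \<Longrightarrow> P (adjoint (S i) y) = adjoint (R i) (P y)"
  shows "P ` max_comm_space n S \<subseteq> max_comm_space n R"
proof -
  let ?M = "max_comm_space n S"
  have invariant: "\<And>i. i < n \<Longrightarrow> adjoint (S i) ` ?M \<subseteq> ?M"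
    and commute: "\<And>i j y. i < n \<Longrightarrow> j < n \<Longrightarrow> y \<in> ?M
        \<Longrightarrow> adjoint (S i) (adjoint (S j) y) = adjoint (S j) (adjoint (S i) y)"
    using comm_inv_subspace_max_comm_space[OF S] by (auto simp: comm_inv_subspace_def)
  have "comm_inv_subspace n R (closure (cspan (P ` ?M)))"
  proof (rule comm_inv_subspace_closure_cspan[OF R])
    fix i assume "i < n"
    show "adjoint (R i) ` P ` ?M \<subseteq> P ` ?M"
      using invariant[OF \<open>i < n\<close>] by (auto simp flip: intertwines[OF \<open>i < n\<close>])
  next
    fix i j x assume "i < n" "j < n" "x \<in> P ` ?M"
    then show "adjoint (R i) (adjoint (R j) x) = adjoint (R j) (adjoint (R i) x)"
      using commute by (auto simp flip: intertwines)
  qed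
  then show ?thesis
    using comm_inv_subspace_le_max_comm_space[OF R] closure_cspan_superset by blast
qed

section \<open>Direct sums\<close>

lemma dsum_op_apply [simp]: "dsum_op A B (x, y) = (A x, B y)"
  by (simp add: dsum_op_def)

lemma bounded_clinear_dsum_op:
  fixes A :: "'a::complex_inner \<Rightarrow> 'a" and B :: "'b::complex_inner \<Rightarrow> 'b"
  assumes "bounded_clinear A" "bounded_clinear B"
  shows "bounded_clinear (dsum_op A B)"
proof -
  have "dsum_op A B = (\<lambda>p. (A (fst p), B (snd p)))"
    by (simp add: dsum_op_def case_prod_beta')
  moreover have "bounded_linear (\<lambda>p::'a \<times> 'b. (A (fst p), B (snd p)))"
    using assms
    by (auto simp: bounded_clinear_iff intro!: bounded_linear_Pair
        bounded_linear_compose[OF _ bounded_linear_fst]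
        bounded_linear_compose[OF _ bounded_linear_snd])
  moreover have "clinear (\<lambda>p::'a \<times> 'b. (A (fst p), B (snd p)))"
    using assms by (simp add: bounded_clinear_def clinear_def scaleC_prod_def)
  ultimately show ?thesis
    by (simp add: bounded_clinear_iff)
qed

lemma adjoint_dsum_op:
  fixes A :: "'a::chilbert_space \<Rightarrow> 'a" and B :: "'b::chilbert_space \<Rightarrow> 'b"
  assumes "bounded_clinear A" "bounded_clinear B"
  shows "adjoint (dsum_op A B) = dsum_op (adjoint A) (adjoint B)"
  by (rule adjoint_eqI)
    (simp add: dsum_op_def cinner_prod_def cinner_adjoint assms split: prod.splits)

lemma closed_csubspace_Times:
  "closed_csubspace L \<Longrightarrow> closed_csubspace M \<Longrightarrow> closed_csubspace (L \<times> M)"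
  by (auto simp: closed_csubspace_def csubspace_def closed_Times scaleC_prod_def zero_prod_def)

lemma comm_inv_subspace_Times:
  fixes R :: "nat \<Rightarrow> 'a::chilbert_space \<Rightarrow> 'a" and T :: "nat \<Rightarrow> 'b::chilbert_space \<Rightarrow> 'b"
  assumes R: "\<forall>i<n. bounded_clinear (R i)" and T: "\<forall>i<n. bounded_clinear (T i)"
    and "comm_inv_subspace n R L" "comm_inv_subspace n T M"
  shows "comm_inv_subspace n (\<lambda>i. dsum_op (R i) (T i)) (L \<times> M)"
proof -
  have "closed_csubspace (L \<times> M)"
    using assms(3,4) by (simp add: comm_inv_subspace_def closed_csubspace_Times)
  then show ?thesis
    using assms(3,4) by (auto simp: comm_inv_subspace_def adjoint_dsum_op R T image_subset_iff)
qed

lemma proj_Times: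
  fixes L :: "'a::chilbert_space set" and M :: "'b::chilbert_space set"
  assumes "closed_csubspace L" "closed_csubspace M"
  shows "proj (L \<times> M) (x, y) = (proj L x, proj M y)"
proof (rule proj_eqI)
  show "closed_csubspace (L \<times> M)"
    using assms by (rule closed_csubspace_Times)
  show "(proj L x, proj M y) \<in> L \<times> M"
    using assms by (simp add: proj_in)
  show "cinner z ((x, y) - (proj L x, proj M y)) = 0" if "z \<in> L \<times> M" for z
    using that assms by (auto simp: cinner_prod_def proj_orthogonal)
qed

lemma max_comm_space_dsum_op:
  fixes R :: "nat \<Rightarrow> 'a::chilbert_space \<Rightarrow> 'a" and T :: "nat \<Rightarrow> 'b::chilbert_space \<Rightarrow> 'b"
  assumes R: "\<forall>i<n. bounded_clinear (R i)" and T: "\<forall>i<n. bounded_clinear (T i)"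
  shows "max_comm_space n (\<lambda>i. dsum_op (R i) (T i)) = max_comm_space n R \<times> max_comm_space n T"
proof
  have D: "\<forall>i<n. bounded_clinear (dsum_op (R i) (T i))"
    using R T by (simp add: bounded_clinear_dsum_op)
  have "fst ` max_comm_space n (\<lambda>i. dsum_op (R i) (T i)) \<subseteq> max_comm_space n R"
    by (rule intertwiner_image_max_comm_space[OF R D])
      (simp add: adjoint_dsum_op R T, simp add: dsum_op_def case_prod_beta)
  moreover have "snd ` max_comm_space n (\<lambda>i. dsum_op (R i) (T i)) \<subseteq> max_comm_space n T"
    by (rule intertwiner_image_max_comm_space[OF T D])
      (simp add: adjoint_dsum_op R T, simp add: dsum_op_def case_prod_beta)
  ultimately show "max_comm_space n (\<lambda>i. dsum_op (R i) (T i))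
      \<subseteq> max_comm_space n R \<times> max_comm_space n T"
    by (auto simp: mem_Times_iff)
  show "max_comm_space n R \<times> max_comm_space n T \<subseteq> max_comm_space n (\<lambda>i. dsum_op (R i) (T i))"
    using R T D
    by (intro comm_inv_subspace_le_max_comm_space comm_inv_subspace_Times
        comm_inv_subspace_max_comm_space)
qed

lemma max_comm_piece_dsum_op:
  fixes R :: "nat \<Rightarrow> 'a::chilbert_space \<Rightarrow> 'a" and T :: "nat \<Rightarrow> 'b::chilbert_space \<Rightarrow> 'b"
  assumes "\<forall>i<n. bounded_clinear (R i)" "\<forall>i<n. bounded_clinear (T i)"
  shows "max_comm_piece n (\<lambda>i. dsum_op (R i) (T i)) i (x, y)
    = (max_comm_piece n R i x, max_comm_piece n T i y)"
  using assms
  by (simp add: max_comm_piece_def max_comm_space_dsum_op proj_Times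
      closed_csubspace_max_comm_space)

section \<open>Hilbert tensor products\<close>

lemma hilbert_tensor_cinner:
  "hilbert_tensor tp \<Longrightarrow> cinner (tp x y) (tp x' y') = cinner x x' * cinner y y'"
  by (simp add: hilbert_tensor_def)

lemma hilbert_tensor_diff_left:
  assumes "hilbert_tensor tp"
  shows "tp (x - x') y = tp x y - tp x' y"
proof -
  have "linear (\<lambda>x. tp x y)"
    using assms by (simp add: hilbert_tensor_def clinear_imp_linear)
  then show ?thesis
    by (rule linear_diff)
qed

lemma bounded_clinear_tensor_left:
  assumes "hilbert_tensor tp"
  shows "bounded_clinear (\<lambda>x. tp x y)"
  unfolding bounded_clinear_def
proof
  show "clinear (\<lambda>x. tp x y)"
    using assms by (simp add: hilbert_tensor_def)
  have "cinner (tp x y) (tp x y) = of_real ((norm x * norm y)\<^sup>2)" for x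
    unfolding hilbert_tensor_cinner[OF assms]
    by (simp add: cinner_self_eq_norm power_mult_distrib del: of_real_power)
  then have "norm (tp x y) = norm x * norm y" for x
    by (simp add: cinner_self_eq_norm power2_eq_iff_nonneg del: of_real_power)
  then show "\<exists>K. \<forall>x. norm (tp x y) \<le> norm x * K"
    by auto
qed

lemma hilbert_tensor_eqI:
  assumes "hilbert_tensor tp" "\<And>x y. cinner (tp x y) u = cinner (tp x y) v"
  shows "u = v"
proof -
  have "u - v = 0"
    using assms by (intro orthogonal_dense_eq_zero[of "{tp x y | x y. True}"])
      (auto simp: hilbert_tensor_def cinner_diff_right)
  then show ?thesis by simp
qed

lemma is_tensor_id_adjoint:
  fixes tp :: "'a::chilbert_space \<Rightarrow> 'b::complex_inner \<Rightarrow> 'c::chilbert_space"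
  assumes tp: "hilbert_tensor tp" and R: "bounded_clinear R" and A: "is_tensor_id tp R A"
  shows "is_tensor_id tp (adjoint R) (adjoint A)"
proof -
  have A': "bounded_clinear A" "\<And>x y. A (tp x y) = tp (R x) y"
    using A by (simp_all add: is_tensor_id_def)
  have "adjoint A (tp x y) = tp (adjoint R x) y" for x y
    by (rule hilbert_tensor_eqI[OF tp])
      (simp add: cinner_adjoint[symmetric] A' R hilbert_tensor_cinner[OF tp])
  then show ?thesis
    by (simp add: is_tensor_id_def bounded_clinear_adjoint A')
qed

lemma orthogonal_tensor_span:
  assumes tp: "hilbert_tensor tp" and w: "\<And>z. z \<in> L \<Longrightarrow> cinner z w = 0"
    and v: "v \<in> closure (cspan {tp x y | x y. x \<in> L})"
  shows "cinner v (tp w y) = 0"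
proof -
  have "closure (cspan {tp x y | x y. x \<in> L}) \<subseteq> {v. cinner v (tp w y) = 0}"
  proof (rule closure_cspan_least[OF closed_csubspace_orthogonal])
    show "{tp x y' | x y'. x \<in> L} \<subseteq> {v. cinner v (tp w y) = 0}"
      using w by (auto simp: hilbert_tensor_cinner[OF tp])
  qed
  then show ?thesis
    using v by blast
qed

lemma proj_tensor_span:
  fixes tp :: "'a::chilbert_space \<Rightarrow> 'b::complex_inner \<Rightarrow> 'c::chilbert_space"
  assumes tp: "hilbert_tensor tp" and L: "closed_csubspace L"
  shows "proj (closure (cspan {tp x y | x y. x \<in> L})) (tp z y) = tp (proj L z) y"
proof (rule proj_eqI[OF closed_csubspace_closure_cspan])
  have "tp (proj L z) y \<in> {tp x y | x y. x \<in> L}"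
    using proj_in[OF L] by auto
  then show "tp (proj L z) y \<in> closure (cspan {tp x y | x y. x \<in> L})"
    by (rule subsetD[OF closure_cspan_superset])
  fix v assume v: "v \<in> closure (cspan {tp x y | x y. x \<in> L})"
  have "\<And>u. u \<in> L \<Longrightarrow> cinner u (z - proj L z) = 0"
    using proj_orthogonal[OF L] by blast
  then have "cinner v (tp (z - proj L z) y) = 0"
    by (rule orthogonal_tensor_span[OF tp _ v])
  then show "cinner v (tp z y - tp (proj L z) y) = 0"
    by (simp only: hilbert_tensor_diff_left[OF tp])
qed

text \<open>The slice adjoint (\<lambda>x. tp x y) h is the partial inner product of h against y.
  To see that h minus its projection onto the span is orthogonal to every tp x y, split
  x = proj L x + (x - proj L x): the first part lies in L, the second is orthogonal to the
  slices of h.\<close>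
lemma tensor_span_if_slices:
  fixes tp :: "'a::chilbert_space \<Rightarrow> 'b::complex_inner \<Rightarrow> 'c::chilbert_space"
  assumes tp: "hilbert_tensor tp" and L: "closed_csubspace L"
    and slices: "\<And>y. adjoint (\<lambda>x. tp x y) h \<in> L"
  shows "h \<in> closure (cspan {tp x y | x y. x \<in> L})"
proof -
  define N where "N = closure (cspan {tp x y | x y. x \<in> L})"
  have N: "closed_csubspace N"
    unfolding N_def by (rule closed_csubspace_closure_cspan)
  have "cinner (tp x y) (h - proj N h) = 0" for x y
  proof -
    define p where "p = proj L x"
    have "tp p y \<in> N"
      unfolding N_def p_def using proj_in[OF L]
      by (intro subsetD[OF closure_cspan_superset]) auto
    then have head: "cinner (tp p y) (h - proj N h) = 0"
      by (rule proj_orthogonal[OF N])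
    have "cinner (tp (x - p) y) h = cinner (x - p) (adjoint (\<lambda>x. tp x y) h)"
      by (rule cinner_adjoint[OF bounded_clinear_tensor_left[OF tp]])
    also have "\<dots> = 0"
      using proj_orthogonal[OF L slices] by (simp add: cinner_eq_zero_commute p_def)
    finally have tail: "cinner (tp (x - p) y) h = 0" .
    have "\<And>u. u \<in> L \<Longrightarrow> cinner u (x - p) = 0"
      using proj_orthogonal[OF L] by (simp add: p_def)
    moreover have "proj N h \<in> closure (cspan {tp x y | x y. x \<in> L})"
      using proj_in[OF N] by (simp add: N_def)
    ultimately have "cinner (proj N h) (tp (x - p) y) = 0"
      by (rule orthogonal_tensor_span[OF tp])
    then have tail_proj: "cinner (tp (x - p) y) (proj N h) = 0"
      by (simp add: cinner_eq_zero_commute)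
    have "tp x y = tp p y + tp (x - p) y"
      by (simp add: hilbert_tensor_diff_left[OF tp])
    then show ?thesis
      using head tail tail_proj by (simp add: cinner_add_left cinner_diff_right)
  qed
  then have "h = proj N h"
    using hilbert_tensor_eqI[OF tp, of h "proj N h"] by (simp add: cinner_diff_right)
  then show ?thesis
    using proj_in[OF N] by (metis N_def)
qed

lemma max_comm_space_tensor:
  fixes R :: "nat \<Rightarrow> 'a::chilbert_space \<Rightarrow> 'a"
    and tp :: "'a \<Rightarrow> 'b::chilbert_space \<Rightarrow> 'c::chilbert_space" and A :: "nat \<Rightarrow> 'c \<Rightarrow> 'c"
  assumes R: "\<forall>i<n. bounded_clinear (R i)" and tp: "hilbert_tensor tp"
    and A: "\<forall>i<n. is_tensor_id tp (R i) (A i)"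
  shows "max_comm_space n A = closure (cspan {tp x y | x y. x \<in> max_comm_space n R})"
proof
  have bA: "\<forall>i<n. bounded_clinear (A i)"
    using A by (simp add: is_tensor_id_def)
  have tensor_left: "bounded_clinear (\<lambda>x. tp x y)" for y
    using tp by (rule bounded_clinear_tensor_left)
  have A_tensor: "A i (tp x y) = tp (R i x) y" if "i < n" for i x y
    using A that by (simp add: is_tensor_id_def)
  show "max_comm_space n A \<subseteq> closure (cspan {tp x y | x y. x \<in> max_comm_space n R})"
  proof
    fix h assume h: "h \<in> max_comm_space n A"
    have "adjoint (\<lambda>x. tp x y) ` max_comm_space n A \<subseteq> max_comm_space n R" for y
    proof (rule intertwiner_image_max_comm_space[OF R bA])
      fix i g assume "i < n"
      then have "bounded_clinear (A i)" "bounded_clinear (R i)"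
        using R bA by simp_all
      have "adjoint (\<lambda>x. tp x y) (adjoint (A i) g) = adjoint (\<lambda>x. A i (tp x y)) g"
        by (simp add: adjoint_compose[OF \<open>bounded_clinear (A i)\<close> tensor_left])
      also have "\<dots> = adjoint (\<lambda>x. tp (R i x) y) g"
        by (simp add: A_tensor[OF \<open>i < n\<close>])
      also have "\<dots> = adjoint (R i) (adjoint (\<lambda>x. tp x y) g)"
        by (simp add: adjoint_compose[OF tensor_left \<open>bounded_clinear (R i)\<close>])
      finally show "adjoint (\<lambda>x. tp x y) (adjoint (A i) g)
          = adjoint (R i) (adjoint (\<lambda>x. tp x y) g)" .
    qed
    then show "h \<in> closure (cspan {tp x y | x y. x \<in> max_comm_space n R})"
      using h by (intro tensor_span_if_slices[OF tp closed_csubspace_max_comm_space[OF R]]) blast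
  qed
  have "(\<lambda>x. tp x y) ` max_comm_space n R \<subseteq> max_comm_space n A" for y
  proof (rule intertwiner_image_max_comm_space[OF bA R])
    fix i x assume "i < n"
    then have "is_tensor_id tp (adjoint (R i)) (adjoint (A i))"
      using A R by (simp add: is_tensor_id_adjoint[OF tp])
    then show "tp (adjoint (R i) x) y = adjoint (A i) (tp x y)"
      by (simp add: is_tensor_id_def)
  qed
  then show "closure (cspan {tp x y | x y. x \<in> max_comm_space n R}) \<subseteq> max_comm_space n A"
    by (intro closure_cspan_least closed_csubspace_max_comm_space[OF bA]) blast
qed

lemma max_comm_piece_tensor:
  fixes R :: "nat \<Rightarrow> 'a::chilbert_space \<Rightarrow> 'a"
    and tp :: "'a \<Rightarrow> 'b::chilbert_space \<Rightarrow> 'c::chilbert_space" and A :: "nat \<Rightarrow> 'c \<Rightarrow> 'c"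
  assumes R: "\<forall>i<n. bounded_clinear (R i)" and tp: "hilbert_tensor tp"
    and A: "\<forall>i<n. is_tensor_id tp (R i) (A i)" and "i < n"
  shows "max_comm_piece n A i (tp x y) = tp (max_comm_piece n R i x) y"
proof -
  have "A i (tp x y) = tp (R i x) y"
    using A \<open>i < n\<close> by (simp add: is_tensor_id_def)
  then show ?thesis
    unfolding max_comm_piece_def max_comm_space_tensor[OF R tp A]
    by (simp only: proj_tensor_span[OF tp closed_csubspace_max_comm_space[OF R]])
qed

theorem corollary5:
  fixes n :: nat
    and R :: "nat \<Rightarrow> 'a::chilbert_space \<Rightarrow> 'a"
    and T :: "nat \<Rightarrow> 'b::chilbert_space \<Rightarrow> 'b"
  assumes "\<forall>i<n. bounded_clinear (R i)"
    and "\<forall>i<n. bounded_clinear (T i)"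
  shows "max_comm_space n (\<lambda>i. dsum_op (R i) (T i))
           = max_comm_space n R \<times> max_comm_space n T
       \<and> (\<forall>i<n. \<forall>x\<in>max_comm_space n R. \<forall>y\<in>max_comm_space n T.
            max_comm_piece n (\<lambda>i. dsum_op (R i) (T i)) i (x, y)
              = (max_comm_piece n R i x, max_comm_piece n T i y))
       \<and> (\<forall>(tp :: 'a \<Rightarrow> 'b \<Rightarrow> 'c::chilbert_space) (A :: nat \<Rightarrow> 'c \<Rightarrow> 'c).
            hilbert_tensor tp \<and> (\<forall>i<n. is_tensor_id tp (R i) (A i)) \<longrightarrow>
              max_comm_space n A
                = closure (cspan {tp x y | x y. x \<in> max_comm_space n R})
              \<and> (\<forall>i<n. \<forall>x\<in>max_comm_space n R. \<forall>y.
                   max_comm_piece n A i (tp x y) = tp (max_comm_piece n R i x) y))"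
proof (intro conjI allI impI ballI)
  show "max_comm_space n (\<lambda>i. dsum_op (R i) (T i)) = max_comm_space n R \<times> max_comm_space n T"
    using assms by (rule max_comm_space_dsum_op)
  show "max_comm_piece n (\<lambda>i. dsum_op (R i) (T i)) i (x, y)
      = (max_comm_piece n R i x, max_comm_piece n T i y)" for i x y
    using assms by (rule max_comm_piece_dsum_op)
  fix tp :: "'a \<Rightarrow> 'b \<Rightarrow> 'c::chilbert_space" and A
  assume "hilbert_tensor tp \<and> (\<forall>i<n. is_tensor_id tp (R i) (A i))"
  then have tp: "hilbert_tensor tp" and A: "\<forall>i<n. is_tensor_id tp (R i) (A i)"
    by simp_all
  show "max_comm_space n A = closure (cspan {tp x y | x y. x \<in> max_comm_space n R})"
    using assms(1) tp A by (rule max_comm_space_tensor)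
  show "max_comm_piece n A i (tp x y) = tp (max_comm_piece n R i x) y" if "i < n" for i x y
    using assms(1) tp A that by (rule max_comm_piece_tensor)
qed


end
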